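(* Let $n\ge3$ and $j\ge 0$. Then $\mathcal{N}_j=N_{\mathcal{B}}(\mathbb{Z}\mathcal{N}_{j-1})$, where $N_{\mathcal{B}}(\mathbb{Z}\mathcal{N}_{j-1})=\{b\in\mathcal{B}: [b,m]\in\mathbb{Z}\mathcal{N}_{j-1}\text{ for all } m\in\mathbb{Z}\mathcal{N}_{j-1}\}$ and $\mathbb{Z}\mathcal{N}_{j-1}$ denotes the $\mathbb{Z}$-span of $\mathcal{N}_{j-1}$ in $\mathfrak{L}(n)$.
   Context: Fix an integer $n\ge 3$. A partition is a sequence $\Lambda=(\lambda_j)_{j\ge1}$ of non-negative integers with finite support; $\mathrm{wt}(\Lambda)=\sum_j j\lambda_j$; $\mathrm{Part}(k)$ is the set of partitions with $\lambda_j=0$ for $j>k$. Write $x^\Lambda=\prod_j x_j^{\lambda_j}$, $\deg(x^\Lambda)=\sum_j\lambda_j$, and let $\partial_k$ be the partial derivative with respect to $x_k$. $\mathfrak{L}(n)$ is the free $\mathbb{Z}$-module with basis $\mathcal{B}=\{x^\Lambda\partial_k : 1\le k\le n,\ \Lambda\in\mathrm{Part}(k-1)\}$, a Lie ring with bracket defined on basis elements by $[x^\Lambda\partial_k,x^\Theta\partial_j]=\partial_j(x^\Lambda)x^\Theta\partial_k$ if $j<k$, $-x^\Lambda\partial_k(x^\Theta)\partial_j$ if $j>k$, $0$ if $j=k$, extended bilinearly. For an integer $i\ge-1$, let $r_i\in\{1,\dots,n-1\}$ with $i\equiv r_i\pmod{n-1}$ and $h_i=\lfloor (i-1)/(n-1)\rfloor+1$.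 Define $\mathrm{WD}(x^\Lambda\partial_k)=\mathrm{wt}(\Lambda)-\deg(x^\Lambda)+n-k$ and $\mathrm{lev}_i(x^\Lambda\partial_k)=h_i\,\mathrm{WD}(x^\Lambda\partial_k)+\deg(x^\Lambda)-1$. For $i\ge-1$, $\mathcal{N}_i=\{b\in\mathcal{B}: \mathrm{lev}_j(b)\le j\text{ for some integer } -1\le j\le i\}$. *)

theory Defs
  imports Main
begin

text \<open>Partitions: sequences (indexed from 1; index 0 unused and forced to 0) of
naturals with finite support.\<close>

type_synonym partition = "nat \<Rightarrow> nat"

definition psupp :: "partition \<Rightarrow> nat set" where
  "psupp L = {j. L j \<noteq> 0}"

definition is_partition :: "partition \<Rightarrow> bool" where
  "is_partition L \<longleftrightarrow> finite (psupp L) \<and> L 0 = 0"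

definition Part :: "nat \<Rightarrow> partition set" where
  "Part k = {L. is_partition L \<and> (\<forall>j. k < j \<longrightarrow> L j = 0)}"

definition wt :: "partition \<Rightarrow> nat" where
  "wt L = (\<Sum>j\<in>psupp L. j * L j)"

definition mdeg :: "partition \<Rightarrow> nat" where
  "mdeg L = (\<Sum>j\<in>psupp L. L j)"

text \<open>Basis element x^L d_k is represented by the pair (L, k).\<close>

type_synonym bas = "partition \<times> nat"

definition basisB :: "nat \<Rightarrow> bas set" where
  "basisB n = {(L, k). 1 \<le> k \<and> k \<le> n \<and> L \<in> Part (k - 1)}"

text \<open>Elements of the free Z-module on B: finitely supported integer coefficient
functions supported in B.\<close>

type_synonym vec = "bas \<Rightarrow> int"

definition vsupp :: "vec \<Rightarrow> bas set" where
  "vsupp v = {b. v b \<noteq> 0}"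

definition Lring :: "nat \<Rightarrow> vec set" where
  "Lring n = {v. finite (vsupp v) \<and> vsupp v \<subseteq> basisB n}"

definition unitv :: "bas \<Rightarrow> vec" where
  "unitv b = (\<lambda>d. if d = b then 1 else 0)"

definition padd :: "partition \<Rightarrow> partition \<Rightarrow> partition" where
  "padd L T = (\<lambda>i. L i + T i)"

text \<open>Bracket on basis elements:
  [x^L d_k, x^T d_j] = d_j(x^L) x^T d_k = L_j x^(L - e_j + T) d_k   if j < k,
                     = - x^L d_k(x^T) d_j = - T_k x^(L + T - e_k) d_j if j > k,
                     = 0 if j = k.\<close>

definition brb :: "bas \<Rightarrow> bas \<Rightarrow> vec" where
  "brb b c = (case b of (L, k) \<Rightarrow> case c of (T, j) \<Rightarrow>
     if j < k then (\<lambda>d. int (L j) * unitv (padd (L(j := L j - 1)) T, k) d)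
     else if k < j then (\<lambda>d. - int (T k) * unitv (padd L (T(k := T k - 1)), j) d)
     else (\<lambda>d. 0))"

definition lie :: "vec \<Rightarrow> vec \<Rightarrow> vec" where
  "lie u v = (\<lambda>d. \<Sum>b\<in>vsupp u. \<Sum>c\<in>vsupp v. u b * v c * brb b c d)"

definition zspan :: "bas set \<Rightarrow> vec set" where
  "zspan S = {v. finite (vsupp v) \<and> vsupp v \<subseteq> S}"

definition hh :: "nat \<Rightarrow> int \<Rightarrow> int" where
  "hh n i = (i - 1) div (int n - 1) + 1"

definition WD :: "nat \<Rightarrow> bas \<Rightarrow> int" where
  "WD n b = (case b of (L, k) \<Rightarrow> int (wt L) - int (mdeg L) + int n - int k)"

definition lev :: "nat \<Rightarrow> int \<Rightarrow> bas \<Rightarrow> int" where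
  "lev n i b = hh n i * WD n b + int (mdeg (fst b)) - 1"

definition NN :: "nat \<Rightarrow> int \<Rightarrow> bas set" where
  "NN n i = {b \<in> basisB n. \<exists>j. -1 \<le> j \<and> j \<le> i \<and> lev n j b \<le> j}"

definition normalizerB :: "nat \<Rightarrow> bas set \<Rightarrow> bas set" where
  "normalizerB n S = {b \<in> basisB n. \<forall>m\<in>zspan S. lie (unitv b) m \<in> zspan S}"

end

theory Submission
  imports Defs
begin

(* Write m = n - 1. The bracket is graded: if x occurs in [b, c], then
   lev_i(x) = lev_i(b) + lev_i(c) - h_i m, and always i <= h_i m.  Once lev_i(b) <= i, the
   excess lev_i'(b) - h_i' m = h_i' (WD(b) - m) + deg(b) - 1 is <= 0 for all i' >= i and < 0
   for i' > i: it is linear in h_i', and the bound WD + deg <= m for basis elements of degree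
   at most 1 excludes a non-negative slope unless WD = m and deg = 0.  Evaluating the grading
   at the later of the witnesses for b in N_j and c in N_(j-1) (one step earlier if it is b's)
   shows that [b, c] stays in the span of N_(j-1).
   Conversely, b = x^L d_k outside N_j is pushed out of N_(j-1) by bracketing with an element
   of N_(j-1): with d_a for some x_a dividing x^L if j = 0 or WD(b) = 0, and otherwise with
   x_1^(h_j - 1) x_(a-1) d_a for some a >= 2 with x_a dividing x^L, or with
   x_1^(h_j - 1) x_k d_(k+1) if x^L is a power of x_1. *)

lemma hh_mono: "2 \<le> n \<Longrightarrow> i \<le> i' \<Longrightarrow> hh n i \<le> hh n i'"
  unfolding hh_def by (simp add: zdiv_mono1)

lemma hh_mult_bounds:
  assumes "2 \<le> n"
  shows le_hh_mult: "i \<le> hh n i * (int n - 1)"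
    and hh_minus_one_mult_less: "(hh n i - 1) * (int n - 1) < i"
proof -
  let ?m = "int n - 1"
  have "(i - 1) div ?m * ?m + (i - 1) mod ?m = i - 1" by (rule div_mult_mod_eq)
  moreover have "0 \<le> (i - 1) mod ?m" "(i - 1) mod ?m < ?m" using assms by simp_all
  ultimately show "i \<le> hh n i * ?m" "(hh n i - 1) * ?m < i"
    by (simp_all add: hh_def distrib_right)
qed

lemma hh_eq_0: "3 \<le> n \<Longrightarrow> -1 \<le> i \<Longrightarrow> i \<le> 0 \<Longrightarrow> hh n i = 0"
  unfolding hh_def by (subst int_div_pos_eq[where q = "-1" and r = "i - 1 + (int n - 1)"]) auto

lemma hh_nonneg: "3 \<le> n \<Longrightarrow> -1 \<le> i \<Longrightarrow> 0 \<le> hh n i"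
  using hh_mono[of n "-1" i] hh_eq_0[of n "-1"] by simp

lemma hh_pos: "2 \<le> n \<Longrightarrow> 1 \<le> i \<Longrightarrow> 1 \<le> hh n i"
  unfolding hh_def by (simp add: pos_imp_zdiv_nonneg_iff)

lemma hh_mult: "2 \<le> n \<Longrightarrow> 0 \<le> p \<Longrightarrow> hh n (p * (int n - 1)) = p"
  unfolding hh_def by (subst int_div_pos_eq[where q = "p - 1" and r = "int n - 2"]) (auto simp: algebra_simps)

lemma Part_iff: "L \<in> Part k \<longleftrightarrow> L 0 = 0 \<and> (\<forall>j. k < j \<longrightarrow> L j = 0)"
proof
  assume L: "L 0 = 0 \<and> (\<forall>j. k < j \<longrightarrow> L j = 0)"
  then have "psupp L \<subseteq> {..k}" by (auto simp: psupp_def intro: leI)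
  then show "L \<in> Part k" using L finite_subset by (auto simp: Part_def is_partition_def)
qed (simp add: Part_def is_partition_def)

lemma Part_mono: "q \<le> q' \<Longrightarrow> L \<in> Part q \<Longrightarrow> L \<in> Part q'"
  unfolding Part_iff by simp

lemma psupp_Part:
  assumes "L \<in> Part q"
  shows "psupp L \<subseteq> {1..q}"
proof
  fix i assume "i \<in> psupp L"
  then have "L i \<noteq> 0" by (simp add: psupp_def)
  with assms show "i \<in> {1..q}" unfolding Part_iff by (cases "i = 0"; cases "q < i") auto
qed

lemma finite_psupp_Part: "L \<in> Part q \<Longrightarrow> finite (psupp L)"
  by (simp add: Part_def is_partition_def)

lemma padd_commute: "padd A B = padd B A"
  by (simp add: padd_def add.commute)

lemma padd_Part: "A \<in> Part q \<Longrightarrow> B \<in> Part q \<Longrightarrow> padd A B \<in> Part q"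
  by (simp add: Part_iff padd_def)

lemma decr_Part: "L \<in> Part q \<Longrightarrow> L(a := L a - 1) \<in> Part q"
  by (simp add: Part_iff)

definition var_pow :: "nat \<Rightarrow> nat \<Rightarrow> partition" where
  "var_pow q r = (\<lambda>i. if i = q then r else 0)"

lemma var_pow_Part: "1 \<le> q \<Longrightarrow> q \<le> q' \<Longrightarrow> var_pow q r \<in> Part q'"
  by (simp add: Part_iff var_pow_def)

lemma wt_eq_sum: "finite A \<Longrightarrow> psupp L \<subseteq> A \<Longrightarrow> wt L = (\<Sum>i\<in>A. i * L i)"
  unfolding wt_def by (rule sum.mono_neutral_left) (auto simp: psupp_def)

lemma mdeg_eq_sum: "finite A \<Longrightarrow> psupp L \<subseteq> A \<Longrightarrow> mdeg L = (\<Sum>i\<in>A. L i)"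
  unfolding mdeg_def by (rule sum.mono_neutral_left) (auto simp: psupp_def)

lemma psupp_padd: "psupp (padd A B) = psupp A \<union> psupp B"
  by (auto simp: psupp_def padd_def)

lemma wt_padd:
  assumes "finite (psupp A)" "finite (psupp B)"
  shows "wt (padd A B) = wt A + wt B"
proof -
  let ?S = "psupp A \<union> psupp B"
  have "wt (padd A B) = (\<Sum>i\<in>?S. i * padd A B i)"
    using assms by (simp add: wt_eq_sum psupp_padd)
  also have "\<dots> = (\<Sum>i\<in>?S. i * A i + i * B i)"
    by (simp add: padd_def distrib_left)
  also have "\<dots> = wt A + wt B"
    using assms by (simp add: wt_eq_sum[of ?S] sum.distrib)
  finally show ?thesis .
qed

lemma mdeg_padd:
  assumes "finite (psupp A)" "finite (psupp B)"
  shows "mdeg (padd A B) = mdeg A + mdeg B"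
proof -
  let ?S = "psupp A \<union> psupp B"
  have "mdeg (padd A B) = (\<Sum>i\<in>?S. padd A B i)"
    using assms by (simp add: mdeg_eq_sum psupp_padd)
  then show ?thesis
    using assms by (simp add: mdeg_eq_sum[of ?S] padd_def sum.distrib)
qed

lemma psupp_var_pow: "psupp (var_pow q r) \<subseteq> {q}"
  by (auto simp: psupp_def var_pow_def)

lemma wt_var_pow: "wt (var_pow q r) = q * r"
  using wt_eq_sum[OF _ psupp_var_pow] by (simp add: var_pow_def)

lemma mdeg_var_pow: "mdeg (var_pow q r) = r"
  using mdeg_eq_sum[OF _ psupp_var_pow] by (simp add: var_pow_def)

lemma padd_decr_var_pow: "0 < L a \<Longrightarrow> padd (L(a := L a - 1)) (var_pow a 1) = L"
  by (auto simp: padd_def var_pow_def)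

lemma
  assumes "finite (psupp L)" and "0 < L a"
  shows wt_decr: "wt (L(a := L a - 1)) + a = wt L"
    and mdeg_decr: "mdeg (L(a := L a - 1)) + 1 = mdeg L"
proof -
  have fin: "finite (psupp (L(a := L a - 1)))"
    using assms(1) by (rule finite_subset[rotated]) (auto simp: psupp_def)
  have fin': "finite (psupp (var_pow a 1))" using psupp_var_pow finite_subset by blast
  have L: "padd (L(a := L a - 1)) (var_pow a 1) = L" by (rule padd_decr_var_pow) (rule assms(2))
  show "wt (L(a := L a - 1)) + a = wt L"
    using wt_padd[OF fin fin'] unfolding L wt_var_pow by simp
  show "mdeg (L(a := L a - 1)) + 1 = mdeg L"
    using mdeg_padd[OF fin fin'] unfolding L mdeg_var_pow by simp
qed

lemma mdeg_le_wt:
  assumes "L \<in> Part q"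
  shows "mdeg L \<le> wt L"
  unfolding mdeg_def wt_def
proof (rule sum_mono)
  fix i assume "i \<in> psupp L"
  then have "1 \<le> i" using psupp_Part[OF assms] by auto
  then show "L i \<le> i * L i" by simp
qed

lemma wt_le_mult_mdeg:
  assumes "L \<in> Part q"
  shows "wt L \<le> q * mdeg L"
  unfolding mdeg_def wt_def sum_distrib_left
proof (rule sum_mono)
  fix i assume "i \<in> psupp L"
  then have "i \<le> q" using psupp_Part[OF assms] by auto
  then show "i * L i \<le> q * L i" by simp
qed

lemma WD_nonneg:
  assumes "b \<in> basisB n"
  shows "0 \<le> WD n b"
proof -
  obtain L k where b: "b = (L, k)" "1 \<le> k" "k \<le> n" "L \<in> Part (k - 1)"
    using assms by (auto simp: basisB_def)
  then show ?thesis using mdeg_le_wt[OF b(4)] by (simp add: WD_def)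
qed

lemma WD_add_mdeg_le:
  assumes "b \<in> basisB n" and "mdeg (fst b) \<le> 1"
  shows "WD n b + int (mdeg (fst b)) \<le> int n - 1"
proof -
  obtain L k where b: "b = (L, k)" "1 \<le> k" "k \<le> n" "L \<in> Part (k - 1)"
    using assms by (auto simp: basisB_def)
  have "wt L \<le> (k - 1) * mdeg L" by (rule wt_le_mult_mdeg[OF b(4)])
  also have "\<dots> \<le> k - 1" using assms(2) b(1) by simp
  finally show ?thesis using b by (simp add: WD_def)
qed

definition bracket_graded :: "nat \<Rightarrow> bas \<Rightarrow> bas \<Rightarrow> bas \<Rightarrow> bool" where
  "bracket_graded n b c x \<longleftrightarrow> x \<in> basisB n \<and> WD n x = WD n b + WD n c - (int n - 1) \<and>
     mdeg (fst x) + 1 = mdeg (fst b) + mdeg (fst c)"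

lemma bracket_graded_commute: "bracket_graded n b c x \<longleftrightarrow> bracket_graded n c b x"
  by (auto simp: bracket_graded_def)

lemma bracket_graded_derivation:
  assumes D: "(D, k) \<in> basisB n" and U: "(U, j) \<in> basisB n" and "j < k" and "0 < D j"
  shows "bracket_graded n (D, k) (U, j) (padd (D(j := D j - 1)) U, k)"
proof -
  let ?D' = "D(j := D j - 1)"
  have DP: "D \<in> Part (k - 1)" and k: "1 \<le> k" "k \<le> n" using D by (auto simp: basisB_def)
  have UP: "U \<in> Part (k - 1)"
    using U \<open>j < k\<close> Part_mono[of "j - 1" "k - 1" U] by (simp add: basisB_def)
  have D'P: "?D' \<in> Part (k - 1)" using DP by (rule decr_Part)
  note fin = finite_psupp_Part[OF D'P] finite_psupp_Part[OF UP]
  have "(padd ?D' U, k) \<in> basisB n" using padd_Part[OF D'P UP] k by (simp add: basisB_def)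
  moreover have "wt (padd ?D' U) + j = wt D + wt U"
    using wt_padd[OF fin] wt_decr[OF finite_psupp_Part[OF DP] \<open>0 < D j\<close>] by simp
  moreover have "mdeg (padd ?D' U) + 1 = mdeg D + mdeg U"
    using mdeg_padd[OF fin] mdeg_decr[OF finite_psupp_Part[OF DP] \<open>0 < D j\<close>] by simp
  ultimately show ?thesis by (auto simp: bracket_graded_def WD_def)
qed

lemma vsupp_smult_unitv: "vsupp (\<lambda>d. a * unitv x d) = (if a = 0 then {} else {x})"
  by (auto simp: vsupp_def unitv_def)

lemma vsupp_uminus: "vsupp (\<lambda>d. - f d) = vsupp f"
  by (simp add: vsupp_def)

lemma brb_less:
  "j < k \<Longrightarrow> brb (L, k) (T, j) = (\<lambda>d. int (L j) * unitv (padd (L(j := L j - 1)) T, k) d)"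
  by (simp add: brb_def)

lemma brb_greater:
  "k < j \<Longrightarrow> brb (L, k) (T, j) = (\<lambda>d. - int (T k) * unitv (padd L (T(k := T k - 1)), j) d)"
  by (simp add: brb_def)

lemma brb_same: "brb (L, k) (T, k) = (\<lambda>d. 0)"
  by (simp add: brb_def)

lemma vsupp_brb_subset_singleton: "\<exists>x. vsupp (brb b c) \<subseteq> {x}"
proof -
  obtain L k T j where bc: "b = (L, k)" "c = (T, j)" by fastforce
  consider "j < k" | "k < j" | "j = k" by linarith
  then show ?thesis
    by cases (simp_all add: bc brb_less brb_greater brb_same vsupp_uminus vsupp_smult_unitv vsupp_def)
qed

lemma finite_vsupp_brb: "finite (vsupp (brb b c))"
  using vsupp_brb_subset_singleton finite_subset by blast

lemma vsupp_brb_graded: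
  assumes b: "b \<in> basisB n" and c: "c \<in> basisB n" and x: "x \<in> vsupp (brb b c)"
  shows "bracket_graded n b c x"
proof -
  obtain L k T j where bc: "b = (L, k)" "c = (T, j)" by fastforce
  consider "j < k" | "k < j" | "j = k" by linarith
  then show ?thesis
  proof cases
    case 1
    then show ?thesis using bracket_graded_derivation[of L k n T j] b c x
      by (auto simp: bc brb_less vsupp_smult_unitv split: if_splits)
  next
    case 2
    then show ?thesis using bracket_graded_derivation[of T j n L k] b c x
      by (auto simp: bc brb_greater vsupp_uminus vsupp_smult_unitv padd_commute bracket_graded_commute
          split: if_splits)
  next
    case 3
    then show ?thesis using x by (simp add: bc brb_same vsupp_def)
  qed
qed

lemma vsupp_brb_less_nonempty: "j < k \<Longrightarrow> 0 < L j \<Longrightarrow> vsupp (brb (L, k) (T, j)) \<noteq> {}"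
  by (simp add: brb_less vsupp_smult_unitv)

lemma vsupp_brb_greater_nonempty: "k < j \<Longrightarrow> 0 < T k \<Longrightarrow> vsupp (brb (L, k) (T, j)) \<noteq> {}"
  by (simp add: brb_greater vsupp_uminus vsupp_smult_unitv)

lemma vsupp_unitv: "vsupp (unitv b) = {b}"
  by (auto simp: vsupp_def unitv_def)

lemma lie_unitv_left: "lie (unitv b) m = (\<lambda>d. \<Sum>c\<in>vsupp m. m c * brb b c d)"
  unfolding lie_def vsupp_unitv by (simp add: unitv_def)

lemma lie_unitv_unitv: "lie (unitv b) (unitv c) = brb b c"
  unfolding lie_unitv_left vsupp_unitv by (simp add: unitv_def)

lemma vsupp_lie_unitv_left: "vsupp (lie (unitv b) m) \<subseteq> (\<Union>c\<in>vsupp m. vsupp (brb b c))"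
proof
  fix d assume "d \<in> vsupp (lie (unitv b) m)"
  then have "(\<Sum>c\<in>vsupp m. m c * brb b c d) \<noteq> 0" by (simp add: vsupp_def lie_unitv_left)
  then obtain c where "c \<in> vsupp m" "m c * brb b c d \<noteq> 0"
    by (meson sum.not_neutral_contains_not_neutral)
  then have "c \<in> vsupp m" "d \<in> vsupp (brb b c)" by (simp_all add: vsupp_def)
  then show "d \<in> (\<Union>c\<in>vsupp m. vsupp (brb b c))" by blast
qed

lemma normalizerB_iff:
  "b \<in> normalizerB n S \<longleftrightarrow> b \<in> basisB n \<and> (\<forall>c\<in>S. vsupp (brb b c) \<subseteq> S)"
proof (intro iffI conjI ballI)
  fix c assume "b \<in> normalizerB n S" and "c \<in> S"
  then have "lie (unitv b) (unitv c) \<in> zspan S"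
    by (simp add: normalizerB_def zspan_def vsupp_unitv)
  then show "vsupp (brb b c) \<subseteq> S" by (simp add: lie_unitv_unitv zspan_def)
next
  assume b: "b \<in> basisB n \<and> (\<forall>c\<in>S. vsupp (brb b c) \<subseteq> S)"
  have "lie (unitv b) m \<in> zspan S" if "m \<in> zspan S" for m
  proof -
    have "finite (\<Union>c\<in>vsupp m. vsupp (brb b c))"
      using that by (simp add: zspan_def finite_vsupp_brb)
    moreover have "(\<Union>c\<in>vsupp m. vsupp (brb b c)) \<subseteq> S"
      using that b by (auto simp: zspan_def)
    ultimately show ?thesis
      using vsupp_lie_unitv_left[of b m] by (auto simp: zspan_def intro: finite_subset)
  qed
  then show "b \<in> normalizerB n S" using b by (simp add: normalizerB_def)
qed (simp add: normalizerB_def)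

lemma lev_mono:
  assumes "2 \<le> n" and "b \<in> basisB n" and "i \<le> i'"
  shows "lev n i b \<le> lev n i' b"
proof -
  have "hh n i * WD n b \<le> hh n i' * WD n b"
    using assms by (intro mult_right_mono hh_mono WD_nonneg)
  then show ?thesis by (simp add: lev_def)
qed

lemma lev_graded:
  assumes "bracket_graded n b c x"
  shows "lev n i x = lev n i b + lev n i c - hh n i * (int n - 1)"
proof -
  have W: "WD n x = WD n b + WD n c - (int n - 1)"
    and D: "int (mdeg (fst x)) = int (mdeg (fst b)) + int (mdeg (fst c)) - 1"
    using assms by (simp_all add: bracket_graded_def flip: of_nat_add)
  show ?thesis unfolding lev_def W D by (simp add: algebra_simps)
qed

lemma lev_less_hh_mult:
  assumes n: "3 \<le> n" and b: "b \<in> basisB n"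
    and i: "-1 \<le> i" "lev n i b \<le> i" and "i < i'"
  shows "lev n i' b < hh n i' * (int n - 1)"
proof -
  define m W D where "m = int n - 1" and "W = WD n b" and "D = int (mdeg (fst b))"
  define h h' where "h = hh n i" and "h' = hh n i'"
  have lev: "lev n k b = hh n k * W + D - 1" for k by (simp add: lev_def W_def D_def)
  have "h \<le> h'" using hh_mono[of n i i'] n \<open>i < i'\<close> by (simp add: h_def h'_def)
  show ?thesis
  proof (cases "h = h'")
    case True
    then have "lev n i' b = lev n i b" by (simp add: lev h_def h'_def)
    then show ?thesis using i \<open>i < i'\<close> le_hh_mult[of n i'] n by simp
  next
    case False
    have "i \<le> h * m" using le_hh_mult[of n i] n by (simp add: h_def m_def)
    then have excess: "h * (W - m) + D - 1 \<le> 0"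
      using i(2) by (simp add: lev h_def algebra_simps)
    have "h' * (W - m) + D - 1 < 0"
    proof (cases "W < m")
      case True
      have "1 * 1 \<le> (h' - h) * (m - W)"
        using \<open>h \<le> h'\<close> False True by (intro mult_mono) auto
      then show ?thesis using excess by (simp add: algebra_simps)
    next
      case False
      have "0 \<le> h * (W - m)" using hh_nonneg[OF n i(1)] False by (simp add: h_def)
      then have "mdeg (fst b) \<le> 1" using excess by (simp add: D_def)
      then have "W + D \<le> m"
        using WD_add_mdeg_le[OF b] by (simp add: W_def D_def m_def)
      then have "W = m" "D = 0" using False by (simp_all add: D_def)
      then show ?thesis by simp
    qed
    then show ?thesis by (simp add: lev h'_def m_def algebra_simps)
  qed
qed

lemma lev_le_hh_mult:
  assumes "3 \<le> n" and "b \<in> basisB n" and "-1 \<le> i" "lev n i b \<le> i" and "i \<le> i'"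
  shows "lev n i' b \<le> hh n i' * (int n - 1)"
proof (cases "i = i'")
  case True
  then show ?thesis using assms le_hh_mult[of n i] by simp
next
  case False
  then show ?thesis using assms lev_less_hh_mult[of n b i i'] by simp
qed

lemma NN_bracket_closed:
  assumes n: "3 \<le> n" and "b \<in> NN n j" and "c \<in> NN n (j - 1)" and x: "bracket_graded n b c x"
  shows "x \<in> NN n (j - 1)"
proof -
  obtain j1 where b: "b \<in> basisB n" and j1: "-1 \<le> j1" "j1 \<le> j" "lev n j1 b \<le> j1"
    using assms(2) by (auto simp: NN_def)
  obtain j2 where c: "c \<in> basisB n" and j2: "-1 \<le> j2" "j2 \<le> j - 1" "lev n j2 c \<le> j2"
    using assms(3) by (auto simp: NN_def)
  have xB: "x \<in> basisB n" using x by (simp add: bracket_graded_def)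
  consider "j1 \<le> j2" | "j2 < j1" by linarith
  then show ?thesis
  proof cases
    case 1
    have "lev n j2 x \<le> j2"
      using lev_graded[OF x, of j2] lev_le_hh_mult[OF n b j1(1,3) 1] j2(3) by linarith
    then show ?thesis using xB j2 by (auto simp: NN_def)
  next
    case 2
    have "lev n (j1 - 1) x \<le> lev n j1 x" using lev_mono[OF _ xB] n by simp
    also have "\<dots> \<le> j1 - 1"
      using lev_graded[OF x, of j1] lev_less_hh_mult[OF n c j2(1,3) 2] j1(3) by linarith
    finally show ?thesis using xB j1 j2 2 by (auto simp: NN_def intro!: exI[of _ "j1 - 1"])
  qed
qed

lemma WD_zero_partition: "WD n ((\<lambda>_. 0), a) = int n - int a"
  by (simp add: WD_def wt_def mdeg_def psupp_def)

lemma NN_witness_low: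
  assumes n: "3 \<le> n" and j: "0 \<le> j" and b: "b \<in> basisB n" "b \<notin> NN n j"
    and low: "j = 0 \<or> WD n b = 0"
  shows "\<exists>c\<in>NN n (j - 1). \<not> vsupp (brb b c) \<subseteq> NN n (j - 1)"
proof -
  obtain L k where bk: "b = (L, k)" and k: "1 \<le> k" "k \<le> n" and L: "L \<in> Part (k - 1)"
    using b(1) by (auto simp: basisB_def)
  have nb: "i < lev n i b" if "-1 \<le> i" "i \<le> j" for i
    using b that unfolding NN_def not_le[symmetric] by blast
  have "0 < lev n 0 b" using nb[of 0] j by simp
  then have "psupp L \<noteq> {}" using hh_eq_0[OF n, of 0] by (auto simp: lev_def bk mdeg_def)
  then obtain a where a: "a \<in> psupp L" by blast
  have "0 < L a" using a by (simp add: psupp_def)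
  have "a \<in> {1..k - 1}" using psupp_Part[OF L] a by blast
  then have "1 \<le> a" "a < k" using k by auto
  define c where "c = ((\<lambda>_. 0) :: partition, a)"
  have cB: "c \<in> basisB n"
    using \<open>1 \<le> a\<close> \<open>a < k\<close> k by (simp add: c_def basisB_def Part_iff)
  have lev_c: "lev n i c = hh n i * (int n - int a) - 1" for i
    by (simp add: lev_def c_def WD_zero_partition mdeg_def psupp_def)
  have cN: "c \<in> NN n (j - 1)"
    using cB j hh_eq_0[OF n, of "-1"] lev_c[of "-1"] by (auto simp: NN_def intro!: exI[of _ "-1"])
  obtain x where x: "x \<in> vsupp (brb b c)"
    using vsupp_brb_less_nonempty[OF \<open>a < k\<close>, of L "\<lambda>_. 0"] \<open>0 < L a\<close>
    by (auto simp: bk c_def)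
  have g: "bracket_graded n b c x" by (rule vsupp_brb_graded[OF b(1) cB x])
  have lev_x: "lev n i x = lev n i b - hh n i * (int a - 1) - 1" for i
    using lev_graded[OF g, of i] lev_c[of i] by (simp add: algebra_simps)
  have "x \<notin> NN n (j - 1)"
  proof
    assume "x \<in> NN n (j - 1)"
    then obtain i where i: "-1 \<le> i" "i \<le> j - 1" "lev n i x \<le> i" by (auto simp: NN_def)
    from low show False
    proof
      assume "j = 0"
      then have "i = -1" using i by simp
      then have "lev n i b = lev n 0 b" using hh_eq_0[OF n, of "-1"] hh_eq_0[OF n, of 0]
        by (simp add: lev_def)
      then show False using lev_x[of i] i \<open>0 < lev n 0 b\<close> \<open>i = -1\<close> hh_eq_0[OF n, of "-1"]
        by simp
    next
      assume W: "WD n b = 0"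
      have "0 \<le> WD n x" using g WD_nonneg[of x n] by (simp add: bracket_graded_def)
      then have "a = 1"
        using g W \<open>1 \<le> a\<close> by (simp add: bracket_graded_def c_def WD_zero_partition)
      moreover have "lev n i b = lev n j b" using W by (simp add: lev_def)
      ultimately show False using lev_x[of i] i nb[of j] j by simp
    qed
  qed
  then show ?thesis using cN x by blast
qed

lemma partner_basis:
  assumes "1 \<le> q" "q < n"
  shows "(padd (var_pow 1 p) (var_pow q 1), Suc q) \<in> basisB n"
    and "WD n (padd (var_pow 1 p) (var_pow q 1), Suc q) = int n - 2"
    and "mdeg (padd (var_pow 1 p) (var_pow q 1)) = Suc p"
proof -
  have P: "var_pow 1 p \<in> Part q" "var_pow q 1 \<in> Part q" using assms by (simp_all add: var_pow_Part)
  note fin = finite_psupp_Part[OF P(1)] finite_psupp_Part[OF P(2)]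
  show "(padd (var_pow 1 p) (var_pow q 1), Suc q) \<in> basisB n"
    using padd_Part[OF P] assms by (simp add: basisB_def)
  show "mdeg (padd (var_pow 1 p) (var_pow q 1)) = Suc p" using mdeg_padd[OF fin] by (simp add: mdeg_var_pow)
  moreover have "wt (padd (var_pow 1 p) (var_pow q 1)) = p + q" using wt_padd[OF fin] by (simp add: wt_var_pow)
  ultimately show "WD n (padd (var_pow 1 p) (var_pow q 1), Suc q) = int n - 2"
    using assms by (simp add: WD_def)
qed

lemma exists_bracket_partner:
  assumes b: "(L, k) \<in> basisB n" and W: "0 < WD n (L, k)"
  shows "\<exists>c\<in>basisB n.
    WD n c = int n - 2 \<and> mdeg (fst c) = Suc p \<and> vsupp (brb (L, k) c) \<noteq> {}"
proof -
  have k: "1 \<le> k" "k \<le> n" and L: "L \<in> Part (k - 1)" using b by (auto simp: basisB_def)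
  consider (deep) a where "2 \<le> a" "0 < L a" | (flat) "\<forall>a\<ge>2. L a = 0" by auto
  then show ?thesis
  proof cases
    case deep
    then have "a \<in> psupp L" by (simp add: psupp_def)
    then have "a < k" using psupp_Part[OF L] k by fastforce
    then show ?thesis
      using partner_basis[of "a - 1" n p] vsupp_brb_less_nonempty[of a k L] deep k
      by (intro bexI[of _ "(padd (var_pow 1 p) (var_pow (a - 1) 1), a)"]) auto
  next
    case flat
    have "psupp L \<subseteq> {1}"
    proof
      fix i assume "i \<in> psupp L"
      then have "1 \<le> i" "L i \<noteq> 0" using psupp_Part[OF L] by (auto simp: psupp_def)
      then show "i \<in> {1}" using flat by (cases "2 \<le> i") auto
    qed
    then have "wt L = mdeg L" using wt_eq_sum[of "{1}" L] mdeg_eq_sum[of "{1}" L] by simp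
    then have "k < n" using W k by (simp add: WD_def)
    then show ?thesis
      using partner_basis[of k n p] vsupp_brb_greater_nonempty[of k "Suc k" _ L] k
      by (intro bexI[of _ "(padd (var_pow 1 p) (var_pow k 1), Suc k)"]) (auto simp: padd_def var_pow_def)
  qed
qed

lemma NN_witness_high:
  assumes n: "3 \<le> n" and j: "1 \<le> j" and b: "b \<in> basisB n" "b \<notin> NN n j"
    and W: "0 < WD n b"
  shows "\<exists>c\<in>NN n (j - 1). \<not> vsupp (brb b c) \<subseteq> NN n (j - 1)"
proof -
  have nb: "i < lev n i b" if "-1 \<le> i" "i \<le> j" for i
    using b that unfolding NN_def not_le[symmetric] by blast
  define p where "p = nat (hh n j - 1)"
  have p: "int p = hh n j - 1" using hh_pos[of n j] n j by (simp add: p_def)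
  obtain c where cB: "c \<in> basisB n" and Wc: "WD n c = int n - 2" and mc: "mdeg (fst c) = Suc p"
    and bc: "vsupp (brb b c) \<noteq> {}"
    using exists_bracket_partner[of "fst b" "snd b" n p] b(1) W by auto
  have lev_c: "lev n i c = hh n i * (int n - 2) + int p" for i by (simp add: lev_def Wc mc)
  have cN: "c \<in> NN n (j - 1)"
  proof -
    let ?i = "int p * (int n - 1)"
    have "lev n ?i c = ?i" using hh_mult[of n "int p"] n by (simp add: lev_c algebra_simps)
    moreover have "?i \<le> j - 1" using hh_minus_one_mult_less[of n j] n p by simp
    moreover have "0 \<le> ?i" using n by simp
    ultimately show ?thesis using cB by (auto simp: NN_def intro!: exI[of _ ?i])
  qed
  obtain x where x: "x \<in> vsupp (brb b c)" using bc by blast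
  have lev_x: "lev n i x = lev n i b - hh n i + int p" for i
    using lev_graded[OF vsupp_brb_graded[OF b(1) cB x], of i] lev_c[of i] by (simp add: algebra_simps)
  have "x \<notin> NN n (j - 1)"
  proof
    assume "x \<in> NN n (j - 1)"
    then obtain i where i: "-1 \<le> i" "i \<le> j - 1" "lev n i x \<le> i" by (auto simp: NN_def)
    have "hh n i \<le> hh n (i + 1)" "hh n (i + 1) \<le> hh n j" using hh_mono n i by simp_all
    show False
    proof (cases "hh n i \<le> int p")
      case True
      then show False using lev_x[of i] nb[of i] i by simp
    next
      case False
      then have "hh n (i + 1) = hh n i"
        using \<open>hh n i \<le> hh n (i + 1)\<close> \<open>hh n (i + 1) \<le> hh n j\<close> p by linarith
      then have "lev n (i + 1) b = lev n i b" by (simp add: lev_def)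
      moreover have "hh n i = int p + 1"
        using False \<open>hh n i \<le> hh n (i + 1)\<close> \<open>hh n (i + 1) \<le> hh n j\<close> p by linarith
      ultimately show False using lev_x[of i] nb[of "i + 1"] i by simp
    qed
  qed
  then show ?thesis using cN x by blast
qed

lemma NN_witness:
  assumes "3 \<le> n" and "0 \<le> j" and "b \<in> basisB n" and "b \<notin> NN n j"
  shows "\<exists>c\<in>NN n (j - 1). \<not> vsupp (brb b c) \<subseteq> NN n (j - 1)"
proof (cases "j = 0 \<or> WD n b = 0")
  case True
  then show ?thesis using NN_witness_low assms by blast
next
  case False
  then show ?thesis using NN_witness_high[OF assms(1) _ assms(3,4)] WD_nonneg[OF assms(3)] assms(2)
    by simp
qed

theorem proposition3p3:
  fixes n :: nat and j :: int
  assumes "3 \<le> n" and "0 \<le> j"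
  shows "NN n j = normalizerB n (NN n (j - 1))"
proof (intro set_eqI iffI)
  fix b assume b: "b \<in> NN n j"
  then have bB: "b \<in> basisB n" by (simp add: NN_def)
  have "vsupp (brb b c) \<subseteq> NN n (j - 1)" if c: "c \<in> NN n (j - 1)" for c
  proof
    fix x assume "x \<in> vsupp (brb b c)"
    then have "bracket_graded n b c x" using vsupp_brb_graded bB c by (auto simp: NN_def)
    then show "x \<in> NN n (j - 1)" using NN_bracket_closed assms(1) b c by blast
  qed
  then show "b \<in> normalizerB n (NN n (j - 1))" using bB by (simp add: normalizerB_iff)
next
  fix b assume "b \<in> normalizerB n (NN n (j - 1))"
  then have "b \<in> basisB n" and "\<forall>c\<in>NN n (j - 1). vsupp (brb b c) \<subseteq> NN n (j - 1)"
    by (simp_all add: normalizerB_iff)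
  then show "b \<in> NN n j" using NN_witness[OF assms, of b] by blast
qed

end
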